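(* Fix a target task and the data below, let $\mathcal{S}\subset\mathcal{P}(\mathcal{X}_S)\times A_S$ be a set of source tasks, and for $(\mu,f)\in\mathcal{S}$ let $$\mathcal{C}(\mu,f):=\inf_{T_0^X\in\mathbb{T}_0^X,\;T_0^Y\in\mathbb{T}_0^Y} C\Big(\mathcal{E}^O\big(T_0^Y(\cdot,f(T_0^X(\cdot)))\big),\;D\big(T_0^X\#\mathrm{Law}(X_T),\mu\big)\Big).$$ Assume there is $L_Y>0$ such that for every $T_0^Y\in\mathbb{T}_0^Y$, $\|T_0^Y(x_1,y_1)-T_0^Y(x_2,y_2)\|_{\mathcal{Y}_T}\le L_Y(\|x_1-x_2\|_{\mathcal{X}_T}+\|y_1-y_2\|_{\mathcal{Y}_S})$ for all $(x_1,y_1),(x_2,y_2)\in\mathcal{X}_T\times\mathcal{Y}_S$, and there are $L'>0$, $p\ge1$ with $|\mathcal{E}^O(h_1)-\mathcal{E}^O(h_2)|\le L'\,\mathcal{W}_p(h_1\#\mathrm{Law}(X_T),h_2\#\mathrm{Law}(X_T))^p$ for all intermediate models $h_1,h_2$, i.e. all functions $x\mapsto T_0^Y(x,f(T_0^X(x)))$ with $f\in A_S$, $T_0^X\in\mathbb{T}_0^X$, $T_0^Y\in\mathbb{T}_0^Y$. Then $\mathcal{C}$ is continuous on the metric space $(\mathcal{S},d_S)$, where $d_S((\mu_1,f_1),(\mu_2,f_2)):=D(\mu_1,\mu_2)+d_M(f_1,f_2)$.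
   Context: $(\mathcal{X}_T,\|\cdot\|_{\mathcal{X}_T})$, $(\mathcal{Y}_T,\|\cdot\|_{\mathcal{Y}_T})$, $(\mathcal{X}_S,\|\cdot\|_{\mathcal{X}_S})$, $(\mathcal{Y}_S,\|\cdot\|_{\mathcal{Y}_S})$ are Banach spaces; $X_T$ is an $\mathcal{X}_T$-valued random variable. $A_S$ is a set of functions $\mathcal{X}_S\to\mathcal{Y}_S$, $A_T$ a set of functions $\mathcal{X}_T\to\mathcal{Y}_T$. $\mathbb{T}_0^X$ is a nonempty set of maps $\mathcal{X}_T\to\mathcal{X}_S$ and $\mathbb{T}_0^Y$ a nonempty set of maps $\mathcal{X}_T\times\mathcal{Y}_S\to\mathcal{Y}_T$ such that all intermediate models lie in $A_T$. $\mathcal{E}^O:A_T\to[0,\infty)$ is an output transport risk. $D$ is a metric on the set $\mathcal{P}(\mathcal{X}_S)$ of probability measures on $\mathcal{X}_S$ (the input transport risk of $T_0^X$ is $D(T_0^X\#\mathrm{Law}(X_T),\mu)$), and $\#$ denotes pushforward. $C:\mathbb{R}\times\mathbb{R}\to\mathbb{R}$ satisfies $C(0,0)=0$, is non-decreasing in each argument, and there is $L>0$ with $|C(a,b)-C(a',b')|\le L(|a-a'|+|b-b'|)$ for all $a,a',b,b'\ge0$. For a fixed constant $M>0$, $d_M(f_1,f_2):=\min\{M,\sup_{x\in\mathcal{X}_S}\|f_1(x)-f_2(x)\|_{\mathcal{Y}_S}\}$. $\mathcal{W}_p$ is the $p$-Wasserstein distance on probability measures on $\mathcal{Y}_T$ with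 respect to $\|\cdot\|_{\mathcal{Y}_T}$. *)

theory Defs
  imports "HOL-Analysis.Analysis" "HOL-Probability.Probability"
begin

definition prob_measures :: "('a::topological_space) measure set" where
  "prob_measures = {\<mu>. prob_space \<mu> \<and> sets \<mu> = sets borel}"

definition metric_on :: "'a set \<Rightarrow> ('a \<Rightarrow> 'a \<Rightarrow> real) \<Rightarrow> bool" where
  "metric_on S D \<longleftrightarrow>
     (\<forall>x\<in>S. \<forall>y\<in>S. 0 \<le> D x y \<and> D x y = D y x \<and> (D x y = 0 \<longleftrightarrow> x = y)) \<and>
     (\<forall>x\<in>S. \<forall>y\<in>S. \<forall>z\<in>S. D x z \<le> D x y + D y z)"

definition couplings :: "('a::real_normed_vector) measure \<Rightarrow> 'a measure \<Rightarrow> ('a \<times> 'a) measure set" where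
  "couplings \<mu> \<nu> = {\<pi>. prob_space \<pi> \<and> sets \<pi> = sets (borel \<Otimes>\<^sub>M borel) \<and>
                        distr \<pi> borel fst = \<mu> \<and> distr \<pi> borel snd = \<nu>}"

definition wasserstein_pow :: "real \<Rightarrow> ('a::real_normed_vector) measure \<Rightarrow> 'a measure \<Rightarrow> ennreal" where
  "wasserstein_pow p \<mu> \<nu> =
     (INF \<pi>\<in>couplings \<mu> \<nu>. \<integral>\<^sup>+ z. ennreal (norm (fst z - snd z) powr p) \<partial>\<pi>)"

definition d_M :: "real \<Rightarrow> ('a \<Rightarrow> 'b::real_normed_vector) \<Rightarrow> ('a \<Rightarrow> 'b) \<Rightarrow> real" where
  "d_M M f1 f2 = real_of_ereal (min (ereal M) (SUP x. ereal (norm (f1 x - f2 x))))"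

definition intermediate_models ::
  "('xs \<Rightarrow> 'ys) set \<Rightarrow> ('xt \<Rightarrow> 'xs) set \<Rightarrow> ('xt \<Rightarrow> 'ys \<Rightarrow> 'yt) set \<Rightarrow> ('xt \<Rightarrow> 'yt) set" where
  "intermediate_models AS TX TY =
     {(\<lambda>x. TY0 x (f (TX0 x))) | f TX0 TY0. f \<in> AS \<and> TX0 \<in> TX \<and> TY0 \<in> TY}"

definition transfer_cost ::
  "(real \<Rightarrow> real \<Rightarrow> real) \<Rightarrow> (('xt \<Rightarrow> 'yt) \<Rightarrow> real) \<Rightarrow> ('xs measure \<Rightarrow> 'xs measure \<Rightarrow> real)
   \<Rightarrow> 'xt measure \<Rightarrow> ('xt \<Rightarrow> 'xs::topological_space) set \<Rightarrow> ('xt \<Rightarrow> 'ys \<Rightarrow> 'yt) set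
   \<Rightarrow> 'xs measure \<Rightarrow> ('xs \<Rightarrow> 'ys) \<Rightarrow> real" where
  "transfer_cost C EO D lawX TX TY \<mu> f =
     (INF T\<in>TX \<times> TY. C (EO (\<lambda>x. (snd T) x (f ((fst T) x)))) (D (distr lawX borel (fst T)) \<mu>))"

end

theory Submission imports Defs begin

text \<open>For fixed transport maps \<open>(T\<^sub>X, T\<^sub>Y)\<close>, moving the source task from \<open>(\<mu>, f)\<close> to \<open>(\<mu>', f')\<close>
  moves the input risk by at most \<open>D(\<mu>, \<mu>')\<close> (triangle inequality) and the output risk by at most
  \<open>L' (L\<^sub>Y d\<^sub>M(f, f'))\<^sup>p\<close>: the two intermediate models are uniformly \<open>L\<^sub>Y d\<^sub>M(f, f')\<close>-close, so
  the coupling of their laws induced by \<open>X\<^sub>T\<close> itself has transport cost at most \<open>(L\<^sub>Y d\<^sub>M(f, f'))\<^sup>p\<close>.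
  Lipschitz continuity of \<open>C\<close> turns this into a bound on the objective that is uniform in the
  transport maps, hence survives the infimum; for small distances \<open>(L\<^sub>Y d\<^sub>M)\<^sup>p \<le> L\<^sub>Y d\<^sub>M\<close>, so the
  transfer cost is even locally Lipschitz.\<close>

lemma abs_INF_diff_le:
  fixes f g :: "'a \<Rightarrow> real"
  assumes "A \<noteq> {}" "bdd_below (f ` A)" "bdd_below (g ` A)"
    and "\<And>x. x \<in> A \<Longrightarrow> \<bar>f x - g x\<bar> \<le> B"
  shows "\<bar>(INF x\<in>A. f x) - (INF x\<in>A. g x)\<bar> \<le> B"
proof -
  have "(INF x\<in>A. f x) - B \<le> (INF x\<in>A. g x)"
  proof (rule cINF_greatest[OF \<open>A \<noteq> {}\<close>])
    fix x assume "x \<in> A"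
    then show "(INF x\<in>A. f x) - B \<le> g x"
      using cINF_lower[OF \<open>bdd_below (f ` A)\<close>] assms(4) by force
  qed
  moreover have "(INF x\<in>A. g x) - B \<le> (INF x\<in>A. f x)"
  proof (rule cINF_greatest[OF \<open>A \<noteq> {}\<close>])
    fix x assume "x \<in> A"
    then show "(INF x\<in>A. g x) - B \<le> f x"
      using cINF_lower[OF \<open>bdd_below (g ` A)\<close>] assms(4) by force
  qed
  ultimately show ?thesis by linarith
qed

lemma metric_on_nonneg: "metric_on S D \<Longrightarrow> x \<in> S \<Longrightarrow> y \<in> S \<Longrightarrow> 0 \<le> D x y"
  unfolding metric_on_def by blast

lemma metric_on_abs_diff_le:
  assumes "metric_on S D" "x \<in> S" "y \<in> S" "z \<in> S"
  shows "\<bar>D z y - D z x\<bar> \<le> D x y"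
proof -
  have "D z y \<le> D z x + D x y" "D z x \<le> D z y + D y x" "D y x = D x y"
    using assms unfolding metric_on_def by blast+
  then show ?thesis by linarith
qed

lemma d_M_nonneg:
  assumes "0 \<le> M"
  shows "0 \<le> d_M M f g"
proof -
  have "0 \<le> (SUP x. ereal (norm (f x - g x)))"
    by (rule SUP_upper2[of undefined]) auto
  with assms show ?thesis
    unfolding d_M_def by (cases "SUP x. ereal (norm (f x - g x))") (auto simp: min_def)
qed

lemma norm_le_d_M:
  assumes "d_M M f g < M"
  shows "norm (f x - g x) \<le> d_M M f g"
proof -
  define s where "s = (SUP x. ereal (norm (f x - g x)))"
  have "ereal (norm (f x - g x)) \<le> s"
    unfolding s_def by (rule SUP_upper) simp
  moreover have "s < ereal M"
  proof (rule ccontr)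
    assume "\<not> s < ereal M"
    then have "d_M M f g = M"
      unfolding d_M_def s_def[symmetric] by (simp add: min_absorb1)
    with assms show False by simp
  qed
  ultimately obtain r where "s = ereal r"
    by (cases s) auto
  moreover from \<open>s < ereal M\<close> have "d_M M f g = real_of_ereal s"
    unfolding d_M_def s_def[symmetric] by simp
  ultimately show ?thesis
    using \<open>ereal (norm (f x - g x)) \<le> s\<close> by simp
qed

lemma intermediate_modelsI:
  "f \<in> AS \<Longrightarrow> T1 \<in> TX \<Longrightarrow> T2 \<in> TY \<Longrightarrow> (\<lambda>x. T2 x (f (T1 x))) \<in> intermediate_models AS TX TY"
  unfolding intermediate_models_def by blast

lemma distr_in_prob_measures:
  "prob_space M \<Longrightarrow> T \<in> borel_measurable M \<Longrightarrow> distr M borel T \<in> prob_measures"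
  unfolding prob_measures_def by (simp add: prob_space.prob_space_distr)

text \<open>No measurability of \<open>g\<close> is required, because \<open>\<integral>\<^sup>+\<close> is the supremum over simple functions below \<open>g\<close>.\<close>
lemma nn_integral_distr_le:
  assumes T: "T \<in> measurable M N"
  shows "(\<integral>\<^sup>+ y. g y \<partial>distr M N T) \<le> (\<integral>\<^sup>+ x. g (T x) \<partial>M)"
  unfolding nn_integral_def[of "distr M N T"]
proof (rule SUP_least)
  fix s assume "s \<in> {s. simple_function (distr M N T) s \<and> s \<le> g}"
  then have s: "simple_function (distr M N T) s" and "\<And>y. s y \<le> g y"
    by (auto simp: le_fun_def)
  have "integral\<^sup>S (distr M N T) s = (\<integral>\<^sup>+ y. s y \<partial>distr M N T)"
    by (simp add: nn_integral_eq_simple_integral[OF s])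
  also have "\<dots> = (\<integral>\<^sup>+ x. s (T x) \<partial>M)"
    using borel_measurable_simple_function[OF s] by (simp add: nn_integral_distr[OF T])
  also have "\<dots> \<le> (\<integral>\<^sup>+ x. g (T x) \<partial>M)"
    by (intro nn_integral_mono \<open>\<And>y. s y \<le> g y\<close>)
  finally show "integral\<^sup>S (distr M N T) s \<le> (\<integral>\<^sup>+ x. g (T x) \<partial>M)" .
qed

lemma distr_pair_in_couplings:
  assumes "prob_space M" "h1 \<in> borel_measurable M" "h2 \<in> borel_measurable M"
  shows "distr M (borel \<Otimes>\<^sub>M borel) (\<lambda>x. (h1 x, h2 x)) \<in> couplings (distr M borel h1) (distr M borel h2)"
proof -
  have pair: "(\<lambda>x. (h1 x, h2 x)) \<in> measurable M (borel \<Otimes>\<^sub>M borel)"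
    using assms(2,3) by measurable
  show ?thesis
    unfolding couplings_def
    using prob_space.prob_space_distr[OF assms(1) pair]
    by (simp add: distr_distr[OF _ pair] comp_def)
qed

text \<open>The integrand of \<open>wasserstein_pow\<close> need not be measurable on \<open>borel \<Otimes>\<^sub>M borel\<close> (the
  space is not assumed second countable), so \<open>nn_integral_distr\<close> does not apply.\<close>
lemma wasserstein_pow_le_uniform_dist:
  fixes h1 h2 :: "'a \<Rightarrow> 'b::real_normed_vector"
  assumes "prob_space M" "h1 \<in> borel_measurable M" "h2 \<in> borel_measurable M"
    and dist: "\<And>x. norm (h1 x - h2 x) \<le> c" and "0 \<le> p"
  shows "wasserstein_pow p (distr M borel h1) (distr M borel h2) \<le> ennreal (c powr p)"
proof -
  have pair: "(\<lambda>x. (h1 x, h2 x)) \<in> measurable M (borel \<Otimes>\<^sub>M borel)"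
    using assms(2,3) by measurable
  have "wasserstein_pow p (distr M borel h1) (distr M borel h2)
      \<le> (\<integral>\<^sup>+ z. ennreal (norm (fst z - snd z) powr p) \<partial>distr M (borel \<Otimes>\<^sub>M borel) (\<lambda>x. (h1 x, h2 x)))"
    unfolding wasserstein_pow_def by (rule INF_lower[OF distr_pair_in_couplings[OF assms(1-3)]])
  also have "\<dots> \<le> (\<integral>\<^sup>+ x. ennreal (norm (h1 x - h2 x) powr p) \<partial>M)"
    by (rule nn_integral_distr_le[OF pair, where g = "\<lambda>z. ennreal (norm (fst z - snd z) powr p)",
          simplified])
  also have "\<dots> \<le> (\<integral>\<^sup>+ x. ennreal (c powr p) \<partial>M)"
    using dist \<open>0 \<le> p\<close> by (intro nn_integral_mono) (simp add: powr_mono2)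
  also have "\<dots> = ennreal (c powr p)"
    using prob_space.emeasure_space_1[OF assms(1)] by simp
  finally show ?thesis .
qed

lemma powr_le_self: "0 \<le> (x::real) \<Longrightarrow> x \<le> 1 \<Longrightarrow> 1 \<le> p \<Longrightarrow> x powr p \<le> x"
  by (cases "x = 0") (auto intro: powr_le_one_le)

lemma eps_delta_if_locally_lipschitz:
  fixes F :: "'a \<Rightarrow> real" and \<rho> :: "'a \<Rightarrow> 'a \<Rightarrow> real"
  assumes "0 < r" "0 < K"
    and lip: "\<And>s'. s' \<in> S \<Longrightarrow> \<rho> s s' < r \<Longrightarrow> \<bar>F s' - F s\<bar> \<le> K * \<rho> s s'"
  shows "\<forall>\<epsilon>>0. \<exists>\<delta>>0. \<forall>s'\<in>S. \<rho> s s' < \<delta> \<longrightarrow> \<bar>F s' - F s\<bar> < \<epsilon>"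
proof (intro allI impI)
  fix \<epsilon> :: real assume "0 < \<epsilon>"
  show "\<exists>\<delta>>0. \<forall>s'\<in>S. \<rho> s s' < \<delta> \<longrightarrow> \<bar>F s' - F s\<bar> < \<epsilon>"
  proof (intro exI[of _ "min r (\<epsilon> / K)"] conjI ballI impI)
    show "0 < min r (\<epsilon> / K)" using assms \<open>0 < \<epsilon>\<close> by simp
    fix s' assume "s' \<in> S" and close: "\<rho> s s' < min r (\<epsilon> / K)"
    then have "\<bar>F s' - F s\<bar> \<le> K * \<rho> s s'" by (intro lip) auto
    also have "\<dots> < \<epsilon>"
      using close \<open>0 < K\<close> by (simp add: pos_less_divide_eq mult.commute)
    finally show "\<bar>F s' - F s\<bar> < \<epsilon>" .
  qed
qed

locale transfer_problem =
  fixes law :: "'xt::real_normed_vector measure"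
    and AS :: "('xs::topological_space \<Rightarrow> 'ys::real_normed_vector) set"
    and TX :: "('xt \<Rightarrow> 'xs) set"
    and TY :: "('xt \<Rightarrow> 'ys \<Rightarrow> 'yt::real_normed_vector) set"
    and EO :: "('xt \<Rightarrow> 'yt) \<Rightarrow> real"
    and D :: "'xs measure \<Rightarrow> 'xs measure \<Rightarrow> real"
    and C :: "real \<Rightarrow> real \<Rightarrow> real"
    and L LY L' p :: real
  assumes law: "prob_space law"
    and TX_meas: "\<And>T. T \<in> TX \<Longrightarrow> T \<in> borel_measurable law"
    and IM_meas: "\<And>h. h \<in> intermediate_models AS TX TY \<Longrightarrow> h \<in> borel_measurable law"
    and EO_nonneg: "\<And>h. h \<in> intermediate_models AS TX TY \<Longrightarrow> 0 \<le> EO h"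
    and D_metric: "metric_on prob_measures D"
    and C00: "C 0 0 = 0"
    and C_mono1: "\<And>a a' b. a \<le> a' \<Longrightarrow> C a b \<le> C a' b"
    and C_mono2: "\<And>a b b'. b \<le> b' \<Longrightarrow> C a b \<le> C a b'"
    and L_nonneg: "0 \<le> L"
    and C_lip: "\<And>a a' b b'. a \<ge> 0 \<Longrightarrow> a' \<ge> 0 \<Longrightarrow> b \<ge> 0 \<Longrightarrow> b' \<ge> 0 \<Longrightarrow>
                  \<bar>C a b - C a' b'\<bar> \<le> L * (\<bar>a - a'\<bar> + \<bar>b - b'\<bar>)"
    and TY_lip: "\<And>T x1 y1 x2 y2. T \<in> TY \<Longrightarrow>
                  norm (T x1 y1 - T x2 y2) \<le> LY * (norm (x1 - x2) + norm (y1 - y2))"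
    and LY_nonneg: "0 \<le> LY" and L'_nonneg: "0 \<le> L'" and p_ge: "1 \<le> p"
    and EO_lip: "\<And>h1 h2. h1 \<in> intermediate_models AS TX TY \<Longrightarrow> h2 \<in> intermediate_models AS TX TY \<Longrightarrow>
                  ennreal \<bar>EO h1 - EO h2\<bar> \<le>
                  ennreal L' * wasserstein_pow p (distr law borel h1) (distr law borel h2)"
begin

definition objective :: "('xs \<Rightarrow> 'ys) \<Rightarrow> 'xs measure \<Rightarrow> ('xt \<Rightarrow> 'xs) \<times> ('xt \<Rightarrow> 'ys \<Rightarrow> 'yt) \<Rightarrow> real" where
  "objective f \<mu> T = C (EO (\<lambda>x. snd T x (f (fst T x)))) (D (distr law borel (fst T)) \<mu>)"

lemma transfer_cost_eq_INF_objective: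
  "transfer_cost C EO D law TX TY \<mu> f = (INF T\<in>TX \<times> TY. objective f \<mu> T)"
  unfolding transfer_cost_def objective_def ..

lemma input_law_in_prob_measures: "T1 \<in> TX \<Longrightarrow> distr law borel T1 \<in> prob_measures"
  by (simp add: distr_in_prob_measures law TX_meas)

lemma objective_nonneg:
  assumes "f \<in> AS" "\<mu> \<in> prob_measures" "T1 \<in> TX" "T2 \<in> TY"
  shows "0 \<le> objective f \<mu> (T1, T2)"
proof -
  have "0 \<le> EO (\<lambda>x. T2 x (f (T1 x)))"
    using assms by (simp add: EO_nonneg intermediate_modelsI)
  moreover have "0 \<le> D (distr law borel T1) \<mu>"
    using assms D_metric by (simp add: metric_on_nonneg input_law_in_prob_measures)
  ultimately have "C 0 0 \<le> objective f \<mu> (T1, T2)"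
    unfolding objective_def using C_mono1 C_mono2 by (metis fst_conv snd_conv order_trans)
  then show ?thesis by (simp add: C00)
qed

lemma output_risk_diff_le:
  assumes "f \<in> AS" "f' \<in> AS" "T1 \<in> TX" "T2 \<in> TY"
    and close: "\<And>x. norm (f x - f' x) \<le> d" and "0 \<le> d" "LY * d \<le> 1"
  shows "\<bar>EO (\<lambda>x. T2 x (f' (T1 x))) - EO (\<lambda>x. T2 x (f (T1 x)))\<bar> \<le> L' * (LY * d)"
proof -
  define h where "h = (\<lambda>x. T2 x (f (T1 x)))"
  define h' where "h' = (\<lambda>x. T2 x (f' (T1 x)))"
  have IM: "h \<in> intermediate_models AS TX TY" "h' \<in> intermediate_models AS TX TY"
    unfolding h_def h'_def using assms by (simp_all add: intermediate_modelsI)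
  have "norm (h' x - h x) \<le> LY * d" for x
  proof -
    have "norm (h' x - h x) \<le> LY * (norm (x - x) + norm (f' (T1 x) - f (T1 x)))"
      unfolding h_def h'_def by (rule TY_lip[OF \<open>T2 \<in> TY\<close>])
    also have "\<dots> \<le> LY * d"
      using close[of "T1 x"] LY_nonneg by (simp add: norm_minus_commute mult_left_mono)
    finally show ?thesis .
  qed
  then have "wasserstein_pow p (distr law borel h') (distr law borel h) \<le> ennreal ((LY * d) powr p)"
    using IM p_ge by (intro wasserstein_pow_le_uniform_dist law) (auto intro: IM_meas)
  then have "ennreal \<bar>EO h' - EO h\<bar> \<le> ennreal (L' * (LY * d) powr p)"
    using EO_lip[OF IM(2,1)] L'_nonneg by (simp add: ennreal_mult order_trans mult_left_mono)
  then have "\<bar>EO h' - EO h\<bar> \<le> L' * (LY * d) powr p"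
    using L'_nonneg by simp
  also have "\<dots> \<le> L' * (LY * d)"
    using assms(6,7) LY_nonneg L'_nonneg p_ge by (simp add: mult_left_mono powr_le_self)
  finally show ?thesis unfolding h_def h'_def .
qed

lemma objective_diff_le:
  assumes "f \<in> AS" "f' \<in> AS" "\<mu> \<in> prob_measures" "\<mu>' \<in> prob_measures" "T1 \<in> TX" "T2 \<in> TY"
    and "\<And>x. norm (f x - f' x) \<le> d" "0 \<le> d" "LY * d \<le> 1"
  shows "\<bar>objective f' \<mu>' (T1, T2) - objective f \<mu> (T1, T2)\<bar> \<le> L * (L' * (LY * d) + D \<mu> \<mu>')"
proof -
  let ?h = "\<lambda>x. T2 x (f (T1 x))" and ?h' = "\<lambda>x. T2 x (f' (T1 x))" and ?\<nu> = "distr law borel T1"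
  have \<nu>: "?\<nu> \<in> prob_measures"
    using \<open>T1 \<in> TX\<close> by (rule input_law_in_prob_measures)
  have "0 \<le> EO ?h" "0 \<le> EO ?h'" "0 \<le> D ?\<nu> \<mu>" "0 \<le> D ?\<nu> \<mu>'"
    using assms \<nu> D_metric by (simp_all add: EO_nonneg intermediate_modelsI metric_on_nonneg)
  then have "\<bar>objective f' \<mu>' (T1, T2) - objective f \<mu> (T1, T2)\<bar>
      \<le> L * (\<bar>EO ?h' - EO ?h\<bar> + \<bar>D ?\<nu> \<mu>' - D ?\<nu> \<mu>\<bar>)"
    unfolding objective_def by (simp add: C_lip)
  also have "\<dots> \<le> L * (L' * (LY * d) + D \<mu> \<mu>')"
  proof -
    have "\<bar>D ?\<nu> \<mu>' - D ?\<nu> \<mu>\<bar> \<le> D \<mu> \<mu>'"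
      using D_metric assms(3,4) \<nu> by (rule metric_on_abs_diff_le)
    then show ?thesis
      using output_risk_diff_le assms L_nonneg by (simp add: mult_left_mono add_mono)
  qed
  finally show ?thesis .
qed

lemma transfer_cost_diff_le:
  assumes "TX \<noteq> {}" "TY \<noteq> {}" "f \<in> AS" "f' \<in> AS" "\<mu> \<in> prob_measures" "\<mu>' \<in> prob_measures"
    and "\<And>x. norm (f x - f' x) \<le> d" "0 \<le> d" "LY * d \<le> 1"
  shows "\<bar>transfer_cost C EO D law TX TY \<mu>' f' - transfer_cost C EO D law TX TY \<mu> f\<bar>
    \<le> L * (L' * (LY * d) + D \<mu> \<mu>')"
  unfolding transfer_cost_eq_INF_objective
proof (rule abs_INF_diff_le)
  show "TX \<times> TY \<noteq> {}" using assms by simp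
  show "bdd_below (objective f' \<mu>' ` (TX \<times> TY))" "bdd_below (objective f \<mu> ` (TX \<times> TY))"
    using assms by (auto intro!: bdd_belowI2[where m = 0] objective_nonneg)
  show "\<bar>objective f' \<mu>' T - objective f \<mu> T\<bar> \<le> L * (L' * (LY * d) + D \<mu> \<mu>')"
    if "T \<in> TX \<times> TY" for T
    using that assms objective_diff_le by auto
qed

lemma transfer_cost_locally_lipschitz:
  assumes "TX \<noteq> {}" "TY \<noteq> {}" "f \<in> AS" "f' \<in> AS" "\<mu> \<in> prob_measures" "\<mu>' \<in> prob_measures"
    and "0 \<le> M" and close: "D \<mu> \<mu>' + d_M M f f' < min M (1 / LY)"
  shows "\<bar>transfer_cost C EO D law TX TY \<mu>' f' - transfer_cost C EO D law TX TY \<mu> f\<bar>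
    \<le> L * (L' * LY + 1) * (D \<mu> \<mu>' + d_M M f f')"
proof -
  let ?d = "d_M M f f'"
  have "0 \<le> D \<mu> \<mu>'" "0 \<le> ?d"
    using assms D_metric by (simp_all add: metric_on_nonneg d_M_nonneg)
  with close have "?d < M" "?d < 1 / LY"
    by auto
  then have "LY * ?d \<le> 1"
    using LY_nonneg by (cases "LY = 0") (auto simp: less_divide_eq mult.commute)
  with \<open>?d < M\<close> have "\<bar>transfer_cost C EO D law TX TY \<mu>' f' - transfer_cost C EO D law TX TY \<mu> f\<bar>
      \<le> L * (L' * (LY * ?d) + D \<mu> \<mu>')"
    using assms \<open>0 \<le> ?d\<close> by (intro transfer_cost_diff_le norm_le_d_M) auto
  also have "\<dots> \<le> L * (L' * LY + 1) * (D \<mu> \<mu>' + ?d)"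
  proof -
    have "0 \<le> L * (L' * LY * D \<mu> \<mu>' + ?d)"
      using \<open>0 \<le> D \<mu> \<mu>'\<close> \<open>0 \<le> ?d\<close> L_nonneg L'_nonneg LY_nonneg by simp
    then show ?thesis
      by (simp add: algebra_simps)
  qed
  finally show ?thesis .
qed

end

theorem proposition8:
  fixes \<Omega> :: "'w measure"
    and X :: "'w \<Rightarrow> 'xt::banach"
    and AS :: "('xs::banach \<Rightarrow> 'ys::banach) set"
    and AT :: "('xt \<Rightarrow> 'yt::banach) set"
    and TX :: "('xt \<Rightarrow> 'xs) set"
    and TY :: "('xt \<Rightarrow> 'ys \<Rightarrow> 'yt) set"
    and EO :: "('xt \<Rightarrow> 'yt) \<Rightarrow> real"
    and D :: "'xs measure \<Rightarrow> 'xs measure \<Rightarrow> real"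
    and C :: "real \<Rightarrow> real \<Rightarrow> real"
    and L M LY L' p :: real
    and S :: "('xs measure \<times> ('xs \<Rightarrow> 'ys)) set"
  assumes prob: "prob_space \<Omega>"
    and X_meas: "X \<in> borel_measurable \<Omega>"
    and TX_ne: "TX \<noteq> {}" and TY_ne: "TY \<noteq> {}"
    and TX_meas: "\<And>T. T \<in> TX \<Longrightarrow> T \<in> borel_measurable borel"
    and IM_AT: "intermediate_models AS TX TY \<subseteq> AT"
    and IM_meas: "\<And>h. h \<in> intermediate_models AS TX TY \<Longrightarrow> h \<in> borel_measurable borel"
    and EO_nonneg: "\<And>h. h \<in> AT \<Longrightarrow> 0 \<le> EO h"
    and D_metric: "metric_on prob_measures D"
    and C00: "C 0 0 = 0"
    and C_mono1: "\<And>a a' b. a \<le> a' \<Longrightarrow> C a b \<le> C a' b"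
    and C_mono2: "\<And>a b b'. b \<le> b' \<Longrightarrow> C a b \<le> C a b'"
    and L_pos: "L > 0"
    and C_lip: "\<And>a a' b b'. a \<ge> 0 \<Longrightarrow> a' \<ge> 0 \<Longrightarrow> b \<ge> 0 \<Longrightarrow> b' \<ge> 0 \<Longrightarrow>
                  \<bar>C a b - C a' b'\<bar> \<le> L * (\<bar>a - a'\<bar> + \<bar>b - b'\<bar>)"
    and M_pos: "M > 0"
    and S_sub: "S \<subseteq> prob_measures \<times> AS"
    and LY_pos: "LY > 0"
    and TY_lip: "\<And>T x1 y1 x2 y2. T \<in> TY \<Longrightarrow>
                  norm (T x1 y1 - T x2 y2) \<le> LY * (norm (x1 - x2) + norm (y1 - y2))"
    and L'_pos: "L' > 0" and p_ge: "p \<ge> 1"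
    and EO_lip: "\<And>h1 h2. h1 \<in> intermediate_models AS TX TY \<Longrightarrow> h2 \<in> intermediate_models AS TX TY \<Longrightarrow>
                  ennreal \<bar>EO h1 - EO h2\<bar> \<le>
                  ennreal L' * wasserstein_pow p (distr (distr \<Omega> borel X) borel h1)
                                                 (distr (distr \<Omega> borel X) borel h2)"
  shows "\<forall>s\<in>S. \<forall>\<epsilon>>0. \<exists>\<delta>>0. \<forall>s'\<in>S.
           D (fst s) (fst s') + d_M M (snd s) (snd s') < \<delta> \<longrightarrow>
           \<bar>transfer_cost C EO D (distr \<Omega> borel X) TX TY (fst s') (snd s')
             - transfer_cost C EO D (distr \<Omega> borel X) TX TY (fst s) (snd s)\<bar> < \<epsilon>"
proof -
  interpret transfer_problem "distr \<Omega> borel X" AS TX TY EO D C L LY L' p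
  proof (rule transfer_problem.intro)
    show "prob_space (distr \<Omega> borel X)"
      using prob X_meas by (rule prob_space.prob_space_distr)
    show "0 \<le> EO h" if "h \<in> intermediate_models AS TX TY" for h
      using that IM_AT EO_nonneg by blast
  qed (simp_all add: TX_meas IM_meas D_metric C00 C_mono1 C_mono2 C_lip TY_lip EO_lip
      L_pos LY_pos L'_pos p_ge less_imp_le)
  show ?thesis
    using S_sub[THEN subsetD] TX_ne TY_ne M_pos LY_pos L_pos L'_pos
    by (intro ballI eps_delta_if_locally_lipschitz[where r = "min M (1 / LY)" and K = "L * (L' * LY + 1)"]
        transfer_cost_locally_lipschitz) (auto simp: mem_Times_iff add_pos_nonneg)
qed

end
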